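(* Let $U=(\mathbb{R}^2\setminus\{0\})\times\mathbb{R}^{0|1}$ with even coordinates $(p,q)$ and odd coordinate $\tau$. Let $F$ be a superfunction on $U$ of pure parity that is homogeneous of degree $2$, i.e. $\mathcal{E}(F)=2F$. Then for all superfunctions $G,H$ on $U$ of pure parity, $$ \{F,\{G,H\}_{\rm gPb}\} =(-1)^{\sigma(F)}\,\{\{F,G\},H\}_{\rm gPb}+(-1)^{\sigma(F)(\sigma(G)+1)}\,\{G,\{F,H\}\}_{\rm gPb}. $$ In other words, the ghost Poisson bracket is invariant under the action of the conformal Lie superalgebra $\mathcal{K}(1)$ (the space of degree-$2$ homogeneous superfunctions with the Poisson bracket).
   Context: Superfunctions on $U$ are expressions $F=F_0(p,q)+\tau F_1(p,q)$ with $F_0,F_1$ smooth complex-valued functions on $\mathbb{R}^2\setminus\{0\}$, $\tau^2=0$, $\tau$ commuting with $p,q$. Parity: $\sigma(F_0)=0$, $\sigma(\tau F_1)=1$. Partial derivatives $\partial/\partial p,\partial/\partial q$ act coefficientwise, and $\partial(F_0+\tau F_1)/\partial\tau=F_1$. The Euler field is $\mathcal{E}=p\,\partial_p+q\,\partial_q+\tau\,\partial_\tau$. The Poisson bracket is $$\{F,G\}=\frac{\partial F}{\partial p}\frac{\partial G}{\partial q}-\frac{\partial F}{\partial q}\frac{\partial G}{\partial p}+\frac{\partial F}{\partial \tau}\frac{\partial G}{\partial \tau},$$ and the ghost Poisson bracket is the odd operation $$\{F,G\}_{\rm gPb}=\frac{\partial F}{\partial \tau}\,\mathcal{E}(G)-(-1)^{\sigma(F)}\,\mathcal{E}(F)\,\frac{\partial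 G}{\partial \tau}+\tau\left(\frac{\partial F}{\partial p}\frac{\partial G}{\partial q}-\frac{\partial F}{\partial q}\frac{\partial G}{\partial p}\right).$$ *)

theory Defs
  imports "HOL-Analysis.Analysis"
begin

definition U :: "(real \<times> real) set" where
  "U = - {(0, 0)}"

type_synonym cfun = "real \<times> real \<Rightarrow> complex"

text \<open>A superfunction F0 + tau F1 is represented by the pair (F0, F1).\<close>
type_synonym sfun = "cfun \<times> cfun"

definition dP :: "cfun \<Rightarrow> cfun" where
  "dP f = (\<lambda>(p, q). vector_derivative (\<lambda>t. f (t, q)) (at p))"

definition dQ :: "cfun \<Rightarrow> cfun" where
  "dQ f = (\<lambda>(p, q). vector_derivative (\<lambda>t. f (p, t)) (at q))"

text \<open>Smooth (C-infinity) on U: every iterated partial derivative is (Frechet) differentiable on U.\<close>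
definition smooth_on_U :: "cfun \<Rightarrow> bool" where
  "smooth_on_U f \<longleftrightarrow>
     (\<forall>ds :: bool list. (foldr (\<lambda>b g. if b then dP g else dQ g) ds f) differentiable_on U)"

definition superfunction :: "sfun \<Rightarrow> bool" where
  "superfunction F \<longleftrightarrow> smooth_on_U (fst F) \<and> smooth_on_U (snd F)"

definition has_parity :: "sfun \<Rightarrow> nat \<Rightarrow> bool" where
  "has_parity F s \<longleftrightarrow> (s = 0 \<and> (\<forall>x\<in>U. snd F x = 0)) \<or> (s = 1 \<and> (\<forall>x\<in>U. fst F x = 0))"

definition sadd :: "sfun \<Rightarrow> sfun \<Rightarrow> sfun" where
  "sadd A B = ((\<lambda>x. fst A x + fst B x), (\<lambda>x. snd A x + snd B x))"

definition ssub :: "sfun \<Rightarrow> sfun \<Rightarrow> sfun" where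
  "ssub A B = ((\<lambda>x. fst A x - fst B x), (\<lambda>x. snd A x - snd B x))"

definition sscale :: "complex \<Rightarrow> sfun \<Rightarrow> sfun" where
  "sscale c A = ((\<lambda>x. c * fst A x), (\<lambda>x. c * snd A x))"

text \<open>Product using tau^2 = 0 and tau commuting with p, q.\<close>
definition smult :: "sfun \<Rightarrow> sfun \<Rightarrow> sfun" where
  "smult A B = ((\<lambda>x. fst A x * fst B x), (\<lambda>x. fst A x * snd B x + snd A x * fst B x))"

definition sdP :: "sfun \<Rightarrow> sfun" where
  "sdP A = (dP (fst A), dP (snd A))"

definition sdQ :: "sfun \<Rightarrow> sfun" where
  "sdQ A = (dQ (fst A), dQ (snd A))"

definition sdT :: "sfun \<Rightarrow> sfun" where
  "sdT A = (snd A, (\<lambda>x. 0))"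

text \<open>Euler field p d/dp + q d/dq + tau d/dtau.\<close>
definition euler :: "sfun \<Rightarrow> sfun" where
  "euler A = ((\<lambda>(p, q). complex_of_real p * dP (fst A) (p, q) + complex_of_real q * dQ (fst A) (p, q)),
              (\<lambda>(p, q). complex_of_real p * dP (snd A) (p, q) + complex_of_real q * dQ (snd A) (p, q) + snd A (p, q)))"

definition tau :: sfun where
  "tau = ((\<lambda>x. 0), (\<lambda>x. 1))"

definition pb :: "sfun \<Rightarrow> sfun \<Rightarrow> sfun" where
  "pb F G = sadd (ssub (smult (sdP F) (sdQ G)) (smult (sdQ F) (sdP G))) (smult (sdT F) (sdT G))"

text \<open>Ghost Poisson bracket; sF is the parity of F.\<close>
definition gpb :: "nat \<Rightarrow> sfun \<Rightarrow> sfun \<Rightarrow> sfun" where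
  "gpb sF F G = sadd (ssub (smult (sdT F) (euler G)) (sscale ((-1) ^ sF) (smult (euler F) (sdT G))))
                     (smult tau (ssub (smult (sdP F) (sdQ G)) (smult (sdQ F) (sdP G))))"

definition seq_on_U :: "sfun \<Rightarrow> sfun \<Rightarrow> bool" where
  "seq_on_U A B \<longleftrightarrow> (\<forall>x\<in>U. fst A x = fst B x \<and> snd A x = snd B x)"

end

theory Submission
  imports Defs
begin

text \<open>Both sides are evaluated pointwise on U in terms of the partial derivatives of order at most
  two of F, G, H, using Schwarz's theorem to identify mixed partials. Homogeneity of F enters only
  through Euler's relation and its first derivatives. For even F = F0 these express the gradient
  of F0 through its Hessian; for odd F = tau F1 the Hessian of F1 annihilates (p, q), which is
  nonzero on U, so it is a multiple of (q, -p) (q, -p)^T. After these substitutions both sides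
  agree as polynomials.\<close>

definition p_differentiable :: "cfun \<Rightarrow> real \<times> real \<Rightarrow> bool" where
  "p_differentiable f x \<longleftrightarrow> (\<lambda>t. f (t, snd x)) differentiable (at (fst x))"

definition q_differentiable :: "cfun \<Rightarrow> real \<times> real \<Rightarrow> bool" where
  "q_differentiable f x \<longleftrightarrow> (\<lambda>t. f (fst x, t)) differentiable (at (snd x))"

lemma dP_eq: "dP f x = vector_derivative (\<lambda>t. f (t, snd x)) (at (fst x))"
  by (cases x) (simp add: dP_def)

lemma dQ_eq: "dQ f x = vector_derivative (\<lambda>t. f (fst x, t)) (at (snd x))"
  by (cases x) (simp add: dQ_def)

lemma differentiable_imp_partially_differentiable:
  assumes "f differentiable (at x)"
  shows "p_differentiable f x" "q_differentiable f x"
proof -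
  have "(f \<circ> (\<lambda>t. (t, snd x))) differentiable (at (fst x))"
    using assms by (intro differentiable_chain_at derivative_intros) simp
  then show "p_differentiable f x" by (simp add: p_differentiable_def o_def)
  have "(f \<circ> (\<lambda>t. (fst x, t))) differentiable (at (snd x))"
    using assms by (intro differentiable_chain_at derivative_intros) simp
  then show "q_differentiable f x" by (simp add: q_differentiable_def o_def)
qed

lemma has_vector_derivative_dP:
  "g differentiable (at (s, t)) \<Longrightarrow> ((\<lambda>u. g (u, t)) has_vector_derivative dP g (s, t)) (at s)"
  using differentiable_imp_partially_differentiable(1)[of g "(s, t)"]
  by (simp add: p_differentiable_def dP_eq vector_derivative_works)

lemma has_vector_derivative_dQ:
  "g differentiable (at (s, t)) \<Longrightarrow> ((\<lambda>u. g (s, u)) has_vector_derivative dQ g (s, t)) (at t)"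
  using differentiable_imp_partially_differentiable(2)[of g "(s, t)"]
  by (simp add: q_differentiable_def dQ_eq vector_derivative_works)

lemma complex_of_real_differentiable [simp]: "complex_of_real differentiable at a"
  by (simp add: bounded_linear_imp_differentiable[OF bounded_linear_of_real])

lemma p_differentiable_add [simp]:
  "p_differentiable f x \<Longrightarrow> p_differentiable g x \<Longrightarrow> p_differentiable (\<lambda>y. f y + g y) x"
  by (simp add: p_differentiable_def)
lemma p_differentiable_diff [simp]:
  "p_differentiable f x \<Longrightarrow> p_differentiable g x \<Longrightarrow> p_differentiable (\<lambda>y. f y - g y) x"
  by (simp add: p_differentiable_def)
lemma p_differentiable_mult [simp]:
  "p_differentiable f x \<Longrightarrow> p_differentiable g x \<Longrightarrow> p_differentiable (\<lambda>y. f y * g y) x"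
  by (simp add: p_differentiable_def)
lemma p_differentiable_const [simp]: "p_differentiable (\<lambda>y. c) x"
  by (simp add: p_differentiable_def)
lemma p_differentiable_fst [simp]: "p_differentiable (\<lambda>y. complex_of_real (fst y)) x"
  by (simp add: p_differentiable_def)
lemma p_differentiable_snd [simp]: "p_differentiable (\<lambda>y. complex_of_real (snd y)) x"
  by (simp add: p_differentiable_def)

lemma q_differentiable_add [simp]:
  "q_differentiable f x \<Longrightarrow> q_differentiable g x \<Longrightarrow> q_differentiable (\<lambda>y. f y + g y) x"
  by (simp add: q_differentiable_def)
lemma q_differentiable_diff [simp]:
  "q_differentiable f x \<Longrightarrow> q_differentiable g x \<Longrightarrow> q_differentiable (\<lambda>y. f y - g y) x"
  by (simp add: q_differentiable_def)
lemma q_differentiable_mult [simp]: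
  "q_differentiable f x \<Longrightarrow> q_differentiable g x \<Longrightarrow> q_differentiable (\<lambda>y. f y * g y) x"
  by (simp add: q_differentiable_def)
lemma q_differentiable_const [simp]: "q_differentiable (\<lambda>y. c) x"
  by (simp add: q_differentiable_def)
lemma q_differentiable_fst [simp]: "q_differentiable (\<lambda>y. complex_of_real (fst y)) x"
  by (simp add: q_differentiable_def)
lemma q_differentiable_snd [simp]: "q_differentiable (\<lambda>y. complex_of_real (snd y)) x"
  by (simp add: q_differentiable_def)

lemma dP_add [simp]:
  "p_differentiable f x \<Longrightarrow> p_differentiable g x \<Longrightarrow> dP (\<lambda>y. f y + g y) x = dP f x + dP g x"
  by (simp add: p_differentiable_def dP_eq)
lemma dP_diff [simp]:
  "p_differentiable f x \<Longrightarrow> p_differentiable g x \<Longrightarrow> dP (\<lambda>y. f y - g y) x = dP f x - dP g x"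
  by (simp add: p_differentiable_def dP_eq)
lemma dP_mult [simp]:
  "p_differentiable f x \<Longrightarrow> p_differentiable g x \<Longrightarrow>
     dP (\<lambda>y. f y * g y) x = f x * dP g x + dP f x * g x"
  by (simp add: p_differentiable_def dP_eq)
lemma dP_const [simp]: "dP (\<lambda>y. c) x = 0"
  by (simp add: dP_eq)
lemma dP_fst [simp]: "dP (\<lambda>y. complex_of_real (fst y)) x = 1"
  unfolding dP_eq by (rule vector_derivative_at) (auto intro!: derivative_eq_intros)
lemma dP_snd [simp]: "dP (\<lambda>y. complex_of_real (snd y)) x = 0"
  by (simp add: dP_eq)

lemma dQ_add [simp]:
  "q_differentiable f x \<Longrightarrow> q_differentiable g x \<Longrightarrow> dQ (\<lambda>y. f y + g y) x = dQ f x + dQ g x"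
  by (simp add: q_differentiable_def dQ_eq)
lemma dQ_diff [simp]:
  "q_differentiable f x \<Longrightarrow> q_differentiable g x \<Longrightarrow> dQ (\<lambda>y. f y - g y) x = dQ f x - dQ g x"
  by (simp add: q_differentiable_def dQ_eq)
lemma dQ_mult [simp]:
  "q_differentiable f x \<Longrightarrow> q_differentiable g x \<Longrightarrow>
     dQ (\<lambda>y. f y * g y) x = f x * dQ g x + dQ f x * g x"
  by (simp add: q_differentiable_def dQ_eq)
lemma dQ_const [simp]: "dQ (\<lambda>y. c) x = 0"
  by (simp add: dQ_eq)
lemma dQ_snd [simp]: "dQ (\<lambda>y. complex_of_real (snd y)) x = 1"
  unfolding dQ_eq by (rule vector_derivative_at) (auto intro!: derivative_eq_intros)
lemma dQ_fst [simp]: "dQ (\<lambda>y. complex_of_real (fst y)) x = 0"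
  by (simp add: dQ_eq)

lemma vector_derivative_cong_open:
  assumes "open S" "a \<in> S" "\<And>t. t \<in> S \<Longrightarrow> f t = g t"
  shows "vector_derivative f (at a) = vector_derivative g (at a)"
proof -
  have "(f has_vector_derivative v) (at a) \<longleftrightarrow> (g has_vector_derivative v) (at a)" for v
    using assms has_vector_derivative_transform_within_open[of _ _ a S] by metis
  then show ?thesis unfolding vector_derivative_def by simp
qed

lemma dP_cong_open:
  assumes "open S" "\<forall>y\<in>S. f y = g y" "x \<in> S"
  shows "dP f x = dP g x"
proof -
  have "open ((\<lambda>t. (t, snd x)) -` S)"
    using assms(1) by (intro continuous_open_vimage) (auto intro!: continuous_intros)
  then show ?thesis
    unfolding dP_eq by (rule vector_derivative_cong_open) (use assms in auto)
qed

lemma dQ_cong_open: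
  assumes "open S" "\<forall>y\<in>S. f y = g y" "x \<in> S"
  shows "dQ f x = dQ g x"
proof -
  have "open ((\<lambda>t. (fst x, t)) -` S)"
    using assms(1) by (intro continuous_open_vimage) (auto intro!: continuous_intros)
  then show ?thesis
    unfolding dQ_eq by (rule vector_derivative_cong_open) (use assms in auto)
qed

lemma increment_linearization_bound:
  fixes f f' :: "real \<Rightarrow> 'a::real_normed_vector"
  assumes "\<And>t. t \<in> closed_segment a b \<Longrightarrow> (f has_vector_derivative f' t) (at t)"
    and "\<And>t. t \<in> closed_segment a b \<Longrightarrow> norm (f' t - v) \<le> e"
  shows "norm (f b - f a - (b - a) *\<^sub>R v) \<le> \<bar>b - a\<bar> * e"
proof -
  have lin: "((\<lambda>t. t *\<^sub>R v) has_vector_derivative v) (at t within closed_segment a b)" for t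
    unfolding has_vector_derivative_def
    by (rule bounded_linear_imp_has_derivative[OF bounded_linear_scaleR_left])
  have deriv: "((\<lambda>t. f t - t *\<^sub>R v) has_vector_derivative f' t - v) (at t within closed_segment a b)"
    if "t \<in> closed_segment a b" for t
    by (rule has_vector_derivative_diff[OF has_vector_derivative_at_within[OF assms(1)[OF that]] lin])
  have onorm_scale: "onorm (\<lambda>h::real. h *\<^sub>R w) = norm w" for w :: 'a
    using onorm_scaleR_left[OF bounded_linear_ident, of w] onorm_id[where 'a = real] by simp
  have "onorm (\<lambda>h. h *\<^sub>R (f' t - v)) \<le> e" if "t \<in> closed_segment a b" for t
    unfolding onorm_scale by (rule assms(2)[OF that])
  then have "norm ((f b - b *\<^sub>R v) - (f a - a *\<^sub>R v)) \<le> e * norm (b - a)"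
    using deriv unfolding has_vector_derivative_def
    by (intro differentiable_bound[where S = "closed_segment a b"]) auto
  then show ?thesis
    by (simp add: scaleR_diff_left algebra_simps)
qed

lemma second_difference_bound:
  fixes g gp gpq :: "real \<Rightarrow> real \<Rightarrow> 'a::real_normed_vector"
  assumes "\<And>s t. s \<in> closed_segment a a' \<Longrightarrow> t \<in> closed_segment b b' \<Longrightarrow>
      ((\<lambda>s. g s t) has_vector_derivative gp s t) (at s)"
    and "\<And>s t. s \<in> closed_segment a a' \<Longrightarrow> t \<in> closed_segment b b' \<Longrightarrow>
      ((\<lambda>t. gp s t) has_vector_derivative gpq s t) (at t)"
    and "\<And>s t. s \<in> closed_segment a a' \<Longrightarrow> t \<in> closed_segment b b' \<Longrightarrow> norm (gpq s t - M) \<le> e"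
  shows "norm (g a' b' - g a' b - g a b' + g a b - ((a' - a) * (b' - b)) *\<^sub>R M)
           \<le> \<bar>a' - a\<bar> * \<bar>b' - b\<bar> * e"
proof -
  have inner: "norm (gp s b' - gp s b - (b' - b) *\<^sub>R M) \<le> \<bar>b' - b\<bar> * e"
    if "s \<in> closed_segment a a'" for s
    by (rule increment_linearization_bound) (use assms(2,3) that in blast)+
  have outer: "((\<lambda>s. g s b' - g s b) has_vector_derivative gp s b' - gp s b) (at s)"
    if "s \<in> closed_segment a a'" for s
    using assms(1) that by (intro has_vector_derivative_diff) simp_all
  have "norm ((g a' b' - g a' b) - (g a b' - g a b) - (a' - a) *\<^sub>R ((b' - b) *\<^sub>R M))
               \<le> \<bar>a' - a\<bar> * (\<bar>b' - b\<bar> * e)"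
    by (rule increment_linearization_bound[OF outer inner])
  then show ?thesis
    by (simp add: scaleR_scaleR diff_diff_eq2 diff_add_eq mult_ac)
qed

lemma dQ_dP_second_difference:
  assumes "\<And>s t. s \<in> closed_segment a a' \<Longrightarrow> t \<in> closed_segment b b' \<Longrightarrow>
      g differentiable (at (s, t)) \<and> dP g differentiable (at (s, t)) \<and> norm (dQ (dP g) (s, t) - M) \<le> e"
  shows "norm (g (a', b') - g (a', b) - g (a, b') + g (a, b) - ((a' - a) * (b' - b)) *\<^sub>R M)
           \<le> \<bar>a' - a\<bar> * \<bar>b' - b\<bar> * e"
  by (rule second_difference_bound[where g = "\<lambda>s t. g (s, t)"])
    (use assms in \<open>auto intro: has_vector_derivative_dP has_vector_derivative_dQ\<close>)

lemma dP_dQ_second_difference: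
  assumes "\<And>s t. s \<in> closed_segment a a' \<Longrightarrow> t \<in> closed_segment b b' \<Longrightarrow>
      g differentiable (at (s, t)) \<and> dQ g differentiable (at (s, t)) \<and> norm (dP (dQ g) (s, t) - M) \<le> e"
  shows "norm (g (a', b') - g (a', b) - g (a, b') + g (a, b) - ((a' - a) * (b' - b)) *\<^sub>R M)
           \<le> \<bar>a' - a\<bar> * \<bar>b' - b\<bar> * e"
proof -
  have "norm (g (a', b') - g (a, b') - g (a', b) + g (a, b) - ((b' - b) * (a' - a)) *\<^sub>R M)
          \<le> \<bar>b' - b\<bar> * \<bar>a' - a\<bar> * e"
    by (rule second_difference_bound[where g = "\<lambda>t s. g (s, t)" and gp = "\<lambda>t s. dQ g (s, t)"])
      (use assms in \<open>auto intro: has_vector_derivative_dP has_vector_derivative_dQ\<close>)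
  then show ?thesis
    by (simp add: Groups.diff_right_commute[of "g (a', b')" "g (a', b)"] mult.commute)
qed

lemma eventually_nhds_square:
  fixes a b :: real
  assumes "\<forall>\<^sub>F y in nhds (a, b). P y"
  obtains h where "h > 0"
    "\<And>s t. s \<in> closed_segment a (a + h) \<Longrightarrow> t \<in> closed_segment b (b + h) \<Longrightarrow> P (s, t)"
proof -
  obtain d where "d > 0" and d: "\<And>y. dist y (a, b) < d \<Longrightarrow> P y"
    using assms unfolding eventually_nhds_metric by blast
  have "dist (s, t) (a, b) < d" if "s \<in> closed_segment a (a + d / 3)" "t \<in> closed_segment b (b + d / 3)" for s t
  proof -
    have "dist (s, t) (a, b) \<le> \<bar>s - a\<bar> + \<bar>t - b\<bar>"
      using norm_Pair_le[of "s - a" "t - b"] by (simp add: dist_norm)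
    also have "\<dots> \<le> 2 * (d / 3)" using that \<open>d > 0\<close> by (auto simp: closed_segment_eq_real_ivl)
    finally show ?thesis using \<open>d > 0\<close> by simp
  qed
  then show ?thesis using \<open>d > 0\<close> d by (intro that[of "d / 3"]) auto
qed

text \<open>Schwarz's theorem: both mixed partials at x approximate the second difference of g
  over small squares with corner x.\<close>

lemma dP_dQ_commute:
  assumes "open S" "x \<in> S" "g differentiable_on S" "dP g differentiable_on S" "dQ g differentiable_on S"
    and "continuous_on S (dQ (dP g))" "continuous_on S (dP (dQ g))"
  shows "dP (dQ g) x = dQ (dP g) x"
proof -
  obtain a b where x: "x = (a, b)" by (cases x)
  define M N where "M = dQ (dP g) x" and "N = dP (dQ g) x"
  have small: "norm (N - M) \<le> 2 * e" if "e > 0" for e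
  proof -
    have "(dQ (dP g) \<longlongrightarrow> M) (nhds x)" "(dP (dQ g) \<longlongrightarrow> N) (nhds x)"
      using assms(1,2,6,7) unfolding M_def N_def
      by (simp_all add: continuous_on_eq_continuous_at isCont_def tendsto_at_iff_tendsto_nhds)
    then have "\<forall>\<^sub>F y in nhds x. y \<in> S \<and> dist (dQ (dP g) y) M < e \<and> dist (dP (dQ g) y) N < e"
      using eventually_nhds_in_open[OF assms(1,2)] \<open>e > 0\<close> by (auto intro!: eventually_conj tendstoD)
    then have "\<forall>\<^sub>F y in nhds (a, b).
        y \<in> S \<and> norm (dQ (dP g) y - M) \<le> e \<and> norm (dP (dQ g) y - N) \<le> e"
      unfolding x by (rule eventually_mono) (simp add: dist_norm)
    then obtain h where "h > 0" and square: "\<And>s t. s \<in> closed_segment a (a + h) \<Longrightarrow>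
        t \<in> closed_segment b (b + h) \<Longrightarrow>
        (s, t) \<in> S \<and> norm (dQ (dP g) (s, t) - M) \<le> e \<and> norm (dP (dQ g) (s, t) - N) \<le> e"
      by (rule eventually_nhds_square) blast
    have diff_at: "f differentiable (at y)" if "f differentiable_on S" "y \<in> S" for f y
      using that assms(1) differentiable_on_eq_differentiable_at by blast
    define D where "D = g (a + h, b + h) - g (a + h, b) - g (a, b + h) + g (a, b)"
    have "norm (D - (h * h) *\<^sub>R M) \<le> h * h * e"
      using dQ_dP_second_difference[of a "a + h" b "b + h" g M e] square assms(3,4) \<open>h > 0\<close>
      by (simp add: D_def diff_at)
    moreover have "norm (D - (h * h) *\<^sub>R N) \<le> h * h * e"
      using dP_dQ_second_difference[of a "a + h" b "b + h" g N e] square assms(3,5) \<open>h > 0\<close>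
      by (simp add: D_def diff_at)
    ultimately have "norm ((h * h) *\<^sub>R (N - M)) \<le> (h * h) * (2 * e)"
      using norm_triangle_ineq4[of "D - (h * h) *\<^sub>R M" "D - (h * h) *\<^sub>R N"]
      by (simp add: scaleR_diff_right)
    then show ?thesis using \<open>h > 0\<close> by (simp add: mult_le_cancel_left_pos)
  qed
  have "norm (N - M) \<le> 0"
    by (rule field_le_epsilon) (use small[of "_ / 2"] in simp)
  then show ?thesis by (simp add: M_def N_def)
qed

lemma smooth_on_U_dP: "smooth_on_U f \<Longrightarrow> smooth_on_U (dP f)"
  unfolding smooth_on_U_def
proof
  fix ds :: "bool list"
  assume "\<forall>ds. foldr (\<lambda>b g. if b then dP g else dQ g) ds f differentiable_on U"
  then have "foldr (\<lambda>b g. if b then dP g else dQ g) (ds @ [True]) f differentiable_on U" ..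
  then show "foldr (\<lambda>b g. if b then dP g else dQ g) ds (dP f) differentiable_on U" by simp
qed

lemma smooth_on_U_dQ: "smooth_on_U f \<Longrightarrow> smooth_on_U (dQ f)"
  unfolding smooth_on_U_def
proof
  fix ds :: "bool list"
  assume "\<forall>ds. foldr (\<lambda>b g. if b then dP g else dQ g) ds f differentiable_on U"
  then have "foldr (\<lambda>b g. if b then dP g else dQ g) (ds @ [False]) f differentiable_on U" ..
  then show "foldr (\<lambda>b g. if b then dP g else dQ g) ds (dQ f) differentiable_on U" by simp
qed

lemma open_U: "open U"
  by (simp add: U_def open_Compl)

lemma smooth_on_U_differentiable:
  assumes "smooth_on_U f" "x \<in> U"
  shows "f differentiable (at x)"
proof -
  have "foldr (\<lambda>b g. if b then dP g else dQ g) [] f differentiable_on U"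
    using assms(1) unfolding smooth_on_U_def ..
  then show ?thesis using assms(2) open_U differentiable_on_eq_differentiable_at by auto
qed

lemma smooth_on_U_partials:
  assumes "smooth_on_U f" "x \<in> U"
  shows "p_differentiable f x" "q_differentiable f x" "p_differentiable (dP f) x" "q_differentiable (dP f) x"
    "p_differentiable (dQ f) x" "q_differentiable (dQ f) x" "dP (dQ f) x = dQ (dP f) x"
proof -
  have smooth: "smooth_on_U (dP f)" "smooth_on_U (dQ f)" "smooth_on_U (dQ (dP f))" "smooth_on_U (dP (dQ f))"
    using assms(1) smooth_on_U_dP smooth_on_U_dQ by blast+
  then show "p_differentiable f x" "q_differentiable f x" "p_differentiable (dP f) x" "q_differentiable (dP f) x"
    "p_differentiable (dQ f) x" "q_differentiable (dQ f) x"
    using assms differentiable_imp_partially_differentiable smooth_on_U_differentiable by blast+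
  have "g differentiable_on U" if "smooth_on_U g" for g
    using that open_U smooth_on_U_differentiable differentiable_on_eq_differentiable_at by blast
  then show "dP (dQ f) x = dQ (dP f) x"
    using assms smooth open_U by (intro dP_dQ_commute[where S = U]) (simp_all add: differentiable_imp_continuous_on)
qed

lemma vanishing_on_U_partials:
  assumes "\<forall>y\<in>U. f y = 0" "x \<in> U"
  shows "f x = 0" "dP f x = 0" "dQ f x = 0" "dP (dP f) x = 0" "dQ (dP f) x = 0"
    "dP (dQ f) x = 0" "dQ (dQ f) x = 0"
proof -
  have "\<forall>y\<in>U. dP f y = 0" "\<forall>y\<in>U. dQ f y = 0"
    using assms(1) open_U dP_cong_open[of U f "\<lambda>_. 0"] dQ_cong_open[of U f "\<lambda>_. 0"] by auto
  then show "f x = 0" "dP f x = 0" "dQ f x = 0" "dP (dP f) x = 0" "dQ (dP f) x = 0"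
    "dP (dQ f) x = 0" "dQ (dQ f) x = 0"
    using assms open_U dP_cong_open[of U _ "\<lambda>_. 0"] dQ_cong_open[of U _ "\<lambda>_. 0"] by auto
qed

definition euler_homogeneous :: "complex \<Rightarrow> cfun \<Rightarrow> bool" where
  "euler_homogeneous c f \<longleftrightarrow>
     (\<forall>y\<in>U. complex_of_real (fst y) * dP f y + complex_of_real (snd y) * dQ f y = c * f y)"

lemma euler_eq_sscale_iff:
  "seq_on_U (euler F) (sscale c F) \<longleftrightarrow> euler_homogeneous c (fst F) \<and> euler_homogeneous (c - 1) (snd F)"
  by (auto simp: seq_on_U_def euler_def sscale_def euler_homogeneous_def case_prod_beta' algebra_simps)

lemma euler_homogeneous_partials:
  assumes "smooth_on_U f" "euler_homogeneous c f" "x \<in> U"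
  shows "complex_of_real (fst x) * dP (dP f) x + complex_of_real (snd x) * dQ (dP f) x = (c - 1) * dP f x"
    and "complex_of_real (fst x) * dQ (dP f) x + complex_of_real (snd x) * dQ (dQ f) x = (c - 1) * dQ f x"
proof -
  let ?E = "\<lambda>y. complex_of_real (fst y) * dP f y + complex_of_real (snd y) * dQ f y"
  have "\<forall>y\<in>U. ?E y = c * f y" using assms(2) by (simp add: euler_homogeneous_def)
  then have "dP ?E x = dP (\<lambda>y. c * f y) x" "dQ ?E x = dQ (\<lambda>y. c * f y) x"
    using open_U assms(3) by (auto intro: dP_cong_open dQ_cong_open)
  then show "complex_of_real (fst x) * dP (dP f) x + complex_of_real (snd x) * dQ (dP f) x = (c - 1) * dP f x"
    and "complex_of_real (fst x) * dQ (dP f) x + complex_of_real (snd x) * dQ (dQ f) x = (c - 1) * dQ f x"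
    using smooth_on_U_partials[OF assms(1,3)] by (simp_all add: algebra_simps)
qed

lemma symmetric_annihilator_rank_one:
  fixes p q a b c :: complex
  assumes "p \<noteq> 0 \<or> q \<noteq> 0" "p * a + q * b = 0" "p * b + q * c = 0"
  obtains k where "a = k * q\<^sup>2" "b = - k * p * q" "c = k * p\<^sup>2"
proof (cases "p = 0")
  case True
  then have "q \<noteq> 0" "b = 0" "c = 0" using assms by auto
  then show ?thesis using True by (intro that[of "a / q\<^sup>2"]) simp_all
next
  case False
  have "a * p\<^sup>2 = c * q\<^sup>2" "b * p\<^sup>2 = - c * p * q"
    using assms(2,3) by algebra+
  then show ?thesis using False by (intro that[of "c / p\<^sup>2"]) (simp_all add: field_simps)
qed

lemma euler_eq:
  "euler A =
    ((\<lambda>y. complex_of_real (fst y) * dP (fst A) y + complex_of_real (snd y) * dQ (fst A) y),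
     (\<lambda>y. complex_of_real (fst y) * dP (snd A) y + complex_of_real (snd y) * dQ (snd A) y + snd A y))"
  by (simp add: euler_def case_prod_beta')

lemmas sfun_ops_defs =
  pb_def gpb_def sadd_def ssub_def sscale_def smult_def sdP_def sdQ_def sdT_def euler_eq tau_def

lemma sscale_one [simp]: "sscale 1 A = A"
  by (simp add: sscale_def)

lemma pb_even_degree2_gpb:
  assumes "superfunction F" "superfunction G" "superfunction H"
    and "has_parity F 0" "has_parity G sG" "euler_homogeneous 2 (fst F)"
  shows "seq_on_U (pb F (gpb sG G H)) (sadd (gpb sG (pb F G) H) (gpb sG G (pb F H)))"
    (is "seq_on_U ?lhs ?rhs")
  unfolding seq_on_U_def
proof
  fix x assume x: "x \<in> U"
  note jets = smooth_on_U_partials[OF _ x] assms(1-3)[unfolded superfunction_def]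
  have F1: "\<forall>y\<in>U. snd F y = 0" using assms(4) by (simp add: has_parity_def)
  have "smooth_on_U (fst F)" using assms(1) by (simp add: superfunction_def)
  then have
    hP: "dP (fst F) x =
      complex_of_real (fst x) * dP (dP (fst F)) x + complex_of_real (snd x) * dQ (dP (fst F)) x" and
    hQ: "dQ (fst F) x =
      complex_of_real (fst x) * dQ (dP (fst F)) x + complex_of_real (snd x) * dQ (dQ (fst F)) x"
    using euler_homogeneous_partials[OF _ assms(6) x] by simp_all
  from assms(5) consider "sG = 0" "\<forall>y\<in>U. snd G y = 0" | "sG = 1" "\<forall>y\<in>U. fst G y = 0"
    by (auto simp: has_parity_def)
  then show "fst ?lhs x = fst ?rhs x \<and> snd ?lhs x = snd ?rhs x"
  proof cases
    case 1
    show ?thesis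
      by (simp add: 1(1) sfun_ops_defs jets vanishing_on_U_partials[OF F1 x] vanishing_on_U_partials[OF 1(2) x])
        (simp only: hP hQ, (intro conjI; algebra))
  next
    case 2
    show ?thesis
      by (simp add: 2(1) sfun_ops_defs jets vanishing_on_U_partials[OF F1 x] vanishing_on_U_partials[OF 2(2) x])
        (simp only: hP hQ, (intro conjI; algebra))
  qed
qed

lemma pb_odd_degree2_gpb:
  assumes "superfunction F" "superfunction G" "superfunction H"
    and "has_parity F 1" "has_parity G sG" "euler_homogeneous 1 (snd F)"
  shows "seq_on_U (pb F (gpb sG G H))
           (sadd (sscale (-1) (gpb (1 - sG) (pb F G) H)) (sscale ((-1) ^ (sG + 1)) (gpb sG G (pb F H))))"
    (is "seq_on_U ?lhs ?rhs")
  unfolding seq_on_U_def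
proof
  fix x assume x: "x \<in> U"
  note jets = smooth_on_U_partials[OF _ x] assms(1-3)[unfolded superfunction_def]
  have F0: "\<forall>y\<in>U. fst F y = 0" using assms(4) by (simp add: has_parity_def)
  have euler_F1: "snd F x = complex_of_real (fst x) * dP (snd F) x + complex_of_real (snd x) * dQ (snd F) x"
    using assms(6) x by (simp add: euler_homogeneous_def)
  have nonzero: "complex_of_real (fst x) \<noteq> 0 \<or> complex_of_real (snd x) \<noteq> 0"
    using x by (cases x) (auto simp: U_def)
  have "smooth_on_U (snd F)" using assms(1) by (simp add: superfunction_def)
  \<comment> \<open>Euler's relation of degree 1 makes the Hessian of snd F annihilate (p, q).\<close>
  note euler_dF1 = euler_homogeneous_partials[OF this assms(6) x, simplified]
  obtain k where hessian: "dP (dP (snd F)) x = k * (complex_of_real (snd x))\<^sup>2"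
      "dQ (dP (snd F)) x = - k * complex_of_real (fst x) * complex_of_real (snd x)"
      "dQ (dQ (snd F)) x = k * (complex_of_real (fst x))\<^sup>2"
    by (rule symmetric_annihilator_rank_one[OF nonzero euler_dF1])
  from assms(5) consider "sG = 0" "\<forall>y\<in>U. snd G y = 0" | "sG = 1" "\<forall>y\<in>U. fst G y = 0"
    by (auto simp: has_parity_def)
  then show "fst ?lhs x = fst ?rhs x \<and> snd ?lhs x = snd ?rhs x"
  proof cases
    case 1
    show ?thesis
      by (simp add: 1(1) sfun_ops_defs jets vanishing_on_U_partials[OF F0 x] vanishing_on_U_partials[OF 1(2) x])
        (simp only: euler_F1 hessian, (intro conjI; algebra))
  next
    case 2
    show ?thesis
      by (simp add: 2(1) sfun_ops_defs jets vanishing_on_U_partials[OF F0 x] vanishing_on_U_partials[OF 2(2) x])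
        (simp only: euler_F1 hessian, (intro conjI; algebra))
  qed
qed

theorem theorem1:
  fixes F G H :: sfun and sF sG sH :: nat
  assumes "superfunction F" "superfunction G" "superfunction H"
    and "has_parity F sF" "has_parity G sG" "has_parity H sH"
    and "seq_on_U (euler F) (sscale 2 F)"
  shows "seq_on_U (pb F (gpb sG G H))
           (sadd (sscale ((-1) ^ sF) (gpb ((sF + sG) mod 2) (pb F G) H))
                 (sscale ((-1) ^ (sF * (sG + 1))) (gpb sG G (pb F H))))"
proof -
  have sG: "sG = 0 \<or> sG = 1" using assms(5) by (auto simp: has_parity_def)
  have hom: "euler_homogeneous 2 (fst F)" "euler_homogeneous 1 (snd F)"
    using assms(7) by (simp_all add: euler_eq_sscale_iff)
  from assms(4) consider "sF = 0" "has_parity F 0" | "sF = 1" "has_parity F 1"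
    by (auto simp: has_parity_def)
  then show ?thesis
  proof cases
    case 1
    then show ?thesis using pb_even_degree2_gpb[OF assms(1-3) _ assms(5) hom(1)] sG by auto
  next
    case 2
    then show ?thesis using pb_odd_degree2_gpb[OF assms(1-3) _ assms(5) hom(2)] sG by auto
  qed
qed

end
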